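(* Let $M$ be a $\mathtt{dBang}$ term. If $M$ is meaningful, then $\mathrm{nf}(\mathcal T(M))\neq\emptyset$.
   Context: \textbf{dBang.} Terms: $M,N ::= x \mid \lambda x.M \mid MN \mid M[N/x] \mid\ !M \mid \mathrm{der}\,M$ ($M[N/x]$ explicit substitution binding $x$); $M\{N/x\}$ capture-avoiding substitution. List contexts $L ::= \square\mid L[N/x]$. Root rules: $L\langle\lambda x.M\rangle N \mapsto L\langle M[N/x]\rangle$; $M[L\langle !N\rangle/x]\mapsto L\langle M\{N/x\}\rangle$; $\mathrm{der}(L\langle !N\rangle)\mapsto L\langle N\rangle$. Surface contexts $S ::= \square\mid\lambda x.S\mid SM\mid MS\mid S[M/x]\mid M[S/x]\mid\mathrm{der}\,S$; $\to_S$ is the closure of the root rules under surface contexts. Testing contexts: $T ::= \square\mid T N\mid(\lambda x.T)N$. $M$ is meaningful if there exist a testing context $T$ and a term $P$ with $T\langle M\rangle\to_S^* !P$. \textbf{Resources and Taylor expansion.} Resource terms: $m,n ::= x\mid\lambda x.m\mid mn\mid m[n/x]\mid\mathrm{der}\,m\mid[m_1,\dots,m_k]$ ($k\ge0$ multisets). Resource list contexts $l::=\square\mid l[n/x]$. Resource reduction (target a resource term or the zero symbol $\emptyset$), closed under all contexts: $\mathrm{der}(l\langle[m]\rangle)\to l\langle m\rangle$; $\mathrm{der}(l\langle[m_1,\dots,m_k]\rangle)\to\emptyset$ if $k\ne1$; $l\langle\lambda x.m\rangle n\to l\langle m[n/x]\rangle$; $m[l\langle[n_1,\dots,n_k]\rangle/x]\to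 l\langle m\{n_{\sigma(1)}/x_1,\dots,n_{\sigma(k)}/x_k\}\rangle$ for every permutation $\sigma$ when $x_1,\dots,x_k$ are exactly the free occurrences of $x$ in $m$, and $\to\emptyset$ otherwise. Approximation: $x\sqsubset x$; $\lambda x.m\sqsubset\lambda x.M$ if $m\sqsubset M$; $mn\sqsubset MN$ and $m[n/x]\sqsubset M[N/x]$ if $m\sqsubset M,n\sqsubset N$; $\mathrm{der}\,m\sqsubset\mathrm{der}\,M$ if $m\sqsubset M$; $[m_1,\dots,m_k]\sqsubset\ !M$ for any $k\ge0$ if every $m_i\sqsubset M$. $\mathcal T(M)=\{m\mid m\sqsubset M\}$; $\mathrm{nf}(\mathcal T(M))$ is the set of normal resource terms $p$ with $m\to^*p$ for some $m\in\mathcal T(M)$. *)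

theory Defs
  imports Main "HOL-Library.Multiset"
begin

text \<open>Terms up to alpha-equivalence are represented with de Bruijn indices.
  In \<open>Lam M\<close> index 0 of M is bound; in \<open>ES M N\<close> (the explicit substitution
  M[N/x]) index 0 of M is bound (x), N is outside the binder.\<close>

datatype dterm =
    Var nat
  | Lam dterm
  | App dterm dterm
  | ES dterm dterm
  | Bang dterm
  | Der dterm

primrec dlift :: "nat \<Rightarrow> nat \<Rightarrow> dterm \<Rightarrow> dterm" where
  "dlift k c (Var i) = (if c \<le> i then Var (i + k) else Var i)"
| "dlift k c (Lam M) = Lam (dlift k (Suc c) M)"
| "dlift k c (App M N) = App (dlift k c M) (dlift k c N)"
| "dlift k c (ES M N) = ES (dlift k (Suc c) M) (dlift k c N)"
| "dlift k c (Bang M) = Bang (dlift k c M)"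
| "dlift k c (Der M) = Der (dlift k c M)"

text \<open>Capture-avoiding substitution of N for index d (then the binder is removed):
  \<open>dsubst 0 N M\<close> is \<open>M{N/x}\<close> for M with x bound as index 0.\<close>
primrec dsubst :: "nat \<Rightarrow> dterm \<Rightarrow> dterm \<Rightarrow> dterm" where
  "dsubst d N (Var i) = (if i = d then dlift d 0 N else if d < i then Var (i - 1) else Var i)"
| "dsubst d N (Lam M) = Lam (dsubst (Suc d) N M)"
| "dsubst d N (App M1 M2) = App (dsubst d N M1) (dsubst d N M2)"
| "dsubst d N (ES M1 M2) = ES (dsubst (Suc d) N M1) (dsubst d N M2)"
| "dsubst d N (Bang M) = Bang (dsubst d N M)"
| "dsubst d N (Der M) = Der (dsubst d N M)"

text \<open>List contexts \<open>L ::= \<box> | L[N/x]\<close>, represented by the list of the N's, innermost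
  first: \<open>L[N/x]\<langle>M\<rangle> = L\<langle>M\<rangle>[N/x]\<close>.  Its number of binders is the length of the list.\<close>
definition lplug :: "dterm \<Rightarrow> dterm list \<Rightarrow> dterm" where
  "lplug M Ls = foldl ES M Ls"

inductive root :: "dterm \<Rightarrow> dterm \<Rightarrow> bool" where
  root_dB: "root (App (lplug (Lam M) Ls) N) (lplug (ES M (dlift (length Ls) 0 N)) Ls)"
| root_sb: "root (ES M (lplug (Bang N) Ls)) (lplug (dsubst 0 N (dlift (length Ls) 1 M)) Ls)"
| root_d:  "root (Der (lplug (Bang N) Ls)) (lplug N Ls)"

text \<open>Surface reduction: closure of root under surface contexts
  \<open>S ::= \<box> | \<lambda>x.S | S M | M S | S[M/x] | M[S/x] | der S\<close> (not under !).\<close>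
inductive sstep :: "dterm \<Rightarrow> dterm \<Rightarrow> bool" where
  s_root: "root M M' \<Longrightarrow> sstep M M'"
| s_lam:  "sstep M M' \<Longrightarrow> sstep (Lam M) (Lam M')"
| s_appl: "sstep M M' \<Longrightarrow> sstep (App M N) (App M' N)"
| s_appr: "sstep N N' \<Longrightarrow> sstep (App M N) (App M N')"
| s_esl:  "sstep M M' \<Longrightarrow> sstep (ES M N) (ES M' N)"
| s_esr:  "sstep N N' \<Longrightarrow> sstep (ES M N) (ES M N')"
| s_der:  "sstep M M' \<Longrightarrow> sstep (Der M) (Der M')"

datatype tctx = THole | TApp tctx dterm | TLamApp tctx dterm

text \<open>Plugging into a testing context may capture free variables (as with named
  contexts): the hole term is inserted verbatim under the binders of T.\<close>
primrec tplug :: "tctx \<Rightarrow> dterm \<Rightarrow> dterm" where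
  "tplug THole M = M"
| "tplug (TApp T N) M = App (tplug T M) N"
| "tplug (TLamApp T N) M = App (Lam (tplug T M)) N"

text \<open>Renaming of free variables (used to model which free variables of the named
  term get captured by the binders of the named testing context).\<close>
primrec dren :: "(nat \<Rightarrow> nat) \<Rightarrow> dterm \<Rightarrow> dterm" where
  "dren \<rho> (Var i) = Var (\<rho> i)"
| "dren \<rho> (Lam M) = Lam (dren (case_nat 0 (\<lambda>i. Suc (\<rho> i))) M)"
| "dren \<rho> (App M N) = App (dren \<rho> M) (dren \<rho> N)"
| "dren \<rho> (ES M N) = ES (dren (case_nat 0 (\<lambda>i. Suc (\<rho> i))) M) (dren \<rho> N)"
| "dren \<rho> (Bang M) = Bang (dren \<rho> M)"
| "dren \<rho> (Der M) = Der (dren \<rho> M)"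

text \<open>M is meaningful: some testing context T (with arbitrary, injective choice of
  which free variables of M are captured by T) and P with \<open>T\<langle>M\<rangle> \<rightarrow>\<^sub>S\<^sup>* !P\<close>.\<close>
definition meaningful :: "dterm \<Rightarrow> bool" where
  "meaningful M \<longleftrightarrow> (\<exists>T \<rho> P. inj \<rho> \<and> sstep\<^sup>*\<^sup>* (tplug T (dren \<rho> M)) (Bang P))"

datatype rterm =
    RVar nat
  | RLam rterm
  | RApp rterm rterm
  | RES rterm rterm
  | RDer rterm
  | RBag "rterm multiset"

primrec rlift :: "nat \<Rightarrow> nat \<Rightarrow> rterm \<Rightarrow> rterm" where
  "rlift k c (RVar i) = (if c \<le> i then RVar (i + k) else RVar i)"
| "rlift k c (RLam m) = RLam (rlift k (Suc c) m)"
| "rlift k c (RApp m n) = RApp (rlift k c m) (rlift k c n)"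
| "rlift k c (RES m n) = RES (rlift k (Suc c) m) (rlift k c n)"
| "rlift k c (RDer m) = RDer (rlift k c m)"
| "rlift k c (RBag ms) = RBag (image_mset (rlift k c) ms)"

primrec occ :: "nat \<Rightarrow> rterm \<Rightarrow> nat" where
  "occ d (RVar i) = (if i = d then 1 else 0)"
| "occ d (RLam m) = occ (Suc d) m"
| "occ d (RApp m n) = occ d m + occ d n"
| "occ d (RES m n) = occ (Suc d) m + occ d n"
| "occ d (RDer m) = occ d m"
| "occ d (RBag ms) = sum_mset (image_mset (occ d) ms)"

text \<open>Linear substitution: \<open>lsub d m ns m'\<close> holds iff m' is obtained from m by
  replacing the free occurrences of index d by the elements of the multiset ns,
  each occurrence receiving exactly one element and each element used exactly once
  (in any bijective way, i.e. for every permutation \<sigma>), the binder being removed.\<close>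
inductive lsub :: "nat \<Rightarrow> rterm \<Rightarrow> rterm multiset \<Rightarrow> rterm \<Rightarrow> bool" where
  ls_hit:  "lsub d (RVar d) {#n#} (rlift d 0 n)"
| ls_var:  "i \<noteq> d \<Longrightarrow> lsub d (RVar i) {#} (if d < i then RVar (i - 1) else RVar i)"
| ls_lam:  "lsub (Suc d) m A m' \<Longrightarrow> lsub d (RLam m) A (RLam m')"
| ls_app:  "lsub d m A m' \<Longrightarrow> lsub d n B n' \<Longrightarrow> lsub d (RApp m n) (A + B) (RApp m' n')"
| ls_es:   "lsub (Suc d) m A m' \<Longrightarrow> lsub d n B n' \<Longrightarrow> lsub d (RES m n) (A + B) (RES m' n')"
| ls_der:  "lsub d m A m' \<Longrightarrow> lsub d (RDer m) A (RDer m')"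
| ls_nil:  "lsub d (RBag {#}) {#} (RBag {#})"
| ls_cons: "lsub d m A m' \<Longrightarrow> lsub d (RBag ms) B (RBag ms') \<Longrightarrow>
            lsub d (RBag (add_mset m ms)) (A + B) (RBag (add_mset m' ms'))"

definition rlplug :: "rterm \<Rightarrow> rterm list \<Rightarrow> rterm" where
  "rlplug m ls = foldl RES m ls"

text \<open>Resource reduction; the target is \<open>Some p\<close> for a resource term p, or \<open>None\<close>
  for the zero symbol \<emptyset>.  Closed under all contexts; contexts are linear, so a
  subterm reducing to \<emptyset> makes the whole term \<emptyset>.\<close>
inductive rstep :: "rterm \<Rightarrow> rterm option \<Rightarrow> bool" where
  r_der1:  "rstep (RDer (rlplug (RBag {#m#}) ls)) (Some (rlplug m ls))"
| r_der0:  "size ms \<noteq> 1 \<Longrightarrow> rstep (RDer (rlplug (RBag ms) ls)) None"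
| r_beta:  "rstep (RApp (rlplug (RLam m) ls) n) (Some (rlplug (RES m (rlift (length ls) 0 n)) ls))"
| r_sub:   "size ns = occ 0 m \<Longrightarrow> lsub 0 (rlift (length ls) 1 m) ns p \<Longrightarrow>
            rstep (RES m (rlplug (RBag ns) ls)) (Some (rlplug p ls))"
| r_sub0:  "size ns \<noteq> occ 0 m \<Longrightarrow> rstep (RES m (rlplug (RBag ns) ls)) None"
| c_lam:   "rstep m r \<Longrightarrow> rstep (RLam m) (map_option RLam r)"
| c_appl:  "rstep m r \<Longrightarrow> rstep (RApp m n) (map_option (\<lambda>x. RApp x n) r)"
| c_appr:  "rstep n r \<Longrightarrow> rstep (RApp m n) (map_option (RApp m) r)"
| c_esl:   "rstep m r \<Longrightarrow> rstep (RES m n) (map_option (\<lambda>x. RES x n) r)"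
| c_esr:   "rstep n r \<Longrightarrow> rstep (RES m n) (map_option (RES m) r)"
| c_der:   "rstep m r \<Longrightarrow> rstep (RDer m) (map_option RDer r)"
| c_bag:   "rstep m r \<Longrightarrow> rstep (RBag (add_mset m ms)) (map_option (\<lambda>x. RBag (add_mset x ms)) r)"

text \<open>Multi-step reduction to a resource term (never passing through \<emptyset>).\<close>
definition rsteps :: "rterm \<Rightarrow> rterm \<Rightarrow> bool" where
  "rsteps = (\<lambda>m p. rstep m (Some p))\<^sup>*\<^sup>*"

definition rnormal :: "rterm \<Rightarrow> bool" where
  "rnormal p \<longleftrightarrow> (\<nexists>r. rstep p r)"

inductive approx :: "rterm \<Rightarrow> dterm \<Rightarrow> bool" where
  a_var: "approx (RVar i) (Var i)"
| a_lam: "approx m M \<Longrightarrow> approx (RLam m) (Lam M)"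
| a_app: "approx m M \<Longrightarrow> approx n N \<Longrightarrow> approx (RApp m n) (App M N)"
| a_es:  "approx m M \<Longrightarrow> approx n N \<Longrightarrow> approx (RES m n) (ES M N)"
| a_der: "approx m M \<Longrightarrow> approx (RDer m) (Der M)"
| a_bag: "(\<forall>m\<in>#ms. approx m M) \<Longrightarrow> approx (RBag ms) (Bang M)"

definition taylor :: "dterm \<Rightarrow> rterm set" where
  "taylor M = {m. approx m M}"

definition nf_taylor :: "dterm \<Rightarrow> rterm set" where
  "nf_taylor M = {p. rnormal p \<and> (\<exists>m\<in>taylor M. rsteps m p)}"

end

theory Submission
  imports Defs "HOL-Library.Function_Algebras"
begin

text \<open>Resource terms are typed with non-idempotent intersection types: a type environment
  assigns to each variable a multiset of types, one for each of its occurrences, so typing is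
  exactly linear.  A typed term that can reduce can always make a step to a typed term instead
  of to the zero symbol, and every step decreases the size, hence a typed term reduces to a
  normal resource term.  Types are also preserved backwards along resource reduction, and
  surface reduction of dBang is reflected on approximants: if \<open>N \<rightarrow>\<^sub>S N'\<close> and
  \<open>m' \<sqsubset> N'\<close>, then \<open>m' \<leftarrow> m\<close> for some \<open>m \<sqsubset> N\<close>.  Now if \<open>T\<langle>M\<rangle> \<rightarrow>\<^sub>S\<^sup>* !P\<close>, the
  empty bag is a typed approximant of \<open>!P\<close>, so \<open>T\<langle>M\<rangle>\<close> has a typed approximant; its
  subterm approximating \<open>M\<close> is typed as well, so it has a normal form.\<close>

section \<open>Non-idempotent intersection types\<close>

datatype ty = TBag "ty multiset" | TArr "ty multiset" ty

type_synonym env = "nat \<Rightarrow> ty multiset"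

definition env_single :: "nat \<Rightarrow> ty \<Rightarrow> env" where
  "env_single i A = (\<lambda>j. if j = i then {#A#} else {#})"

definition env_cons :: "ty multiset \<Rightarrow> env \<Rightarrow> env" where
  "env_cons M G = case_nat M G"

definition env_lift :: "nat \<Rightarrow> nat \<Rightarrow> env \<Rightarrow> env" where
  "env_lift k c G = (\<lambda>i. if i < c then G i else if i < c + k then {#} else G (i - k))"

definition env_drop :: "nat \<Rightarrow> env \<Rightarrow> env" where
  "env_drop d G = (\<lambda>i. if i < d then G i else G (Suc i))"

lemma env_cons_simps [simp]: "env_cons M G 0 = M" "env_cons M G (Suc i) = G i"
  by (simp_all add: env_cons_def)

lemma env_cons_add [simp]: "env_cons M G + env_cons N D = env_cons (M + N) (G + D)"
  by (rule ext) (simp add: env_cons_def split: nat.split)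

lemma env_cons_eq_iff [simp]: "env_cons M G = env_cons M' G' \<longleftrightarrow> M = M' \<and> G = G'"
proof
  assume eq: "env_cons M G = env_cons M' G'"
  show "M = M' \<and> G = G'"
    using fun_cong[OF eq, of 0] fun_cong[OF eq, of "Suc _"] by auto
qed simp

lemma env_cons_eta: "G = env_cons (G 0) (\<lambda>i. G (Suc i))"
  by (rule ext) (simp add: env_cons_def split: nat.split)

lemma env_lift_single: "env_lift k c (env_single i A) = env_single (if c \<le> i then i + k else i) A"
  by (rule ext) (auto simp: env_lift_def env_single_def)

lemma env_lift_cons: "env_lift k (Suc c) (env_cons M G) = env_cons M (env_lift k c G)"
  by (rule ext) (auto simp: env_lift_def env_cons_def Suc_diff_le split: nat.split)

lemma env_lift_Suc_0: "env_lift (Suc k) 0 G = env_cons {#} (env_lift k 0 G)"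
  by (rule ext) (auto simp: env_lift_def env_cons_def split: nat.split)

lemma env_lift_add: "env_lift k c (G + D) = env_lift k c G + env_lift k c D"
  by (rule ext) (simp add: env_lift_def)

lemma env_lift_zero [simp]: "env_lift k c 0 = 0"
  by (rule ext) (simp add: env_lift_def)

lemma env_lift_0_0 [simp]: "env_lift 0 c G = G"
  by (rule ext) (simp add: env_lift_def)

lemma env_lift_0_below: "i < k \<Longrightarrow> env_lift k 0 G i = {#}"
  by (simp add: env_lift_def)

lemma env_lift_0_above [simp]: "env_lift k 0 G (j + k) = G j"
  by (simp add: env_lift_def)

lemma env_drop_single:
  "env_drop d (env_single i A) = (if i = d then 0 else env_single (if d < i then i - 1 else i) A)"
  by (rule ext) (auto simp: env_drop_def env_single_def)

lemma env_drop_cons: "env_drop (Suc d) (env_cons M G) = env_cons M (env_drop d G)"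
  by (rule ext) (auto simp: env_drop_def env_cons_def split: nat.split)

lemma env_drop_0_cons [simp]: "env_drop 0 (env_cons M G) = G"
  by (rule ext) (simp add: env_drop_def)

lemma env_drop_add: "env_drop d (G + D) = env_drop d G + env_drop d D"
  by (rule ext) (simp add: env_drop_def)

lemma env_drop_zero [simp]: "env_drop d 0 = 0"
  by (rule ext) (simp add: env_drop_def)

text \<open>The environment of \<open>m{ns/d}\<close> when \<open>G\<close> types \<open>m\<close> and \<open>D\<close> types the bag \<open>ns\<close>:
  the free variables of \<open>ns\<close> are lifted over the \<open>d\<close> binders under which \<open>d\<close> occurs.\<close>
definition subst_env :: "nat \<Rightarrow> env \<Rightarrow> env \<Rightarrow> env" where
  "subst_env d G D = env_drop d G + env_lift d 0 D"

lemma subst_env_add: "subst_env d (G1 + G2) (D1 + D2) = subst_env d G1 D1 + subst_env d G2 D2"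
  by (simp add: subst_env_def env_drop_add env_lift_add add_ac)

lemma subst_env_zero [simp]: "subst_env d 0 0 = 0"
  by (simp add: subst_env_def)

lemma subst_env_cons: "subst_env (Suc d) (env_cons M G) D = env_cons M (subst_env d G D)"
  by (simp add: subst_env_def env_drop_cons env_lift_Suc_0)

lemma subst_env_Suc: "subst_env (Suc d) G D = env_cons (G 0) (subst_env d (\<lambda>i. G (Suc i)) D)"
  by (subst env_cons_eta) (rule subst_env_cons)

lemma env_cons_eq_subst_env_Suc:
  assumes "env_cons M G = subst_env (Suc d) Ga D"
  shows "Ga = env_cons M (\<lambda>i. Ga (Suc i))" and "G = subst_env d (\<lambda>i. Ga (Suc i)) D"
proof -
  from assms show "G = subst_env d (\<lambda>i. Ga (Suc i)) D" by (simp add: subst_env_Suc)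
  from assms have "M = Ga 0" by (simp add: subst_env_Suc)
  then show "Ga = env_cons M (\<lambda>i. Ga (Suc i))" by (simp only: env_cons_eta[symmetric])
qed

lemma subst_env_single_same: "subst_env d (env_single d A) D = env_lift d 0 D"
  by (simp add: subst_env_def env_drop_single)

lemma subst_env_single_other:
  "i \<noteq> d \<Longrightarrow> subst_env d (env_single i A) 0 = env_single (if d < i then i - 1 else i) A"
  by (simp add: subst_env_def env_drop_single)

lemma subst_env_0_cons [simp]: "subst_env 0 (env_cons M G) D = G + D"
  by (simp add: subst_env_def)

inductive typing :: "env \<Rightarrow> rterm \<Rightarrow> ty \<Rightarrow> bool" where
  t_var: "typing (env_single i A) (RVar i) A"
| t_lam: "typing (env_cons M G) m B \<Longrightarrow> typing G (RLam m) (TArr M B)"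
| t_app: "typing G m (TArr M B) \<Longrightarrow> typing D n (TBag M) \<Longrightarrow> typing (G + D) (RApp m n) B"
| t_es:  "typing (env_cons M G) m B \<Longrightarrow> typing D n (TBag M) \<Longrightarrow> typing (G + D) (RES m n) B"
| t_der: "typing G m (TBag {#A#}) \<Longrightarrow> typing G (RDer m) A"
| t_nil: "typing 0 (RBag {#}) (TBag {#})"
| t_cons: "typing G m A \<Longrightarrow> typing D (RBag ms) (TBag M) \<Longrightarrow>
     typing (G + D) (RBag (add_mset m ms)) (TBag (add_mset A M))"

inductive_cases typing_varE: "typing G (RVar i) A"
inductive_cases typing_lamE: "typing G (RLam m) A"
inductive_cases typing_appE: "typing G (RApp m n) A"
inductive_cases typing_esE: "typing G (RES m n) A"
inductive_cases typing_derE: "typing G (RDer m) A"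
inductive_cases typing_bagE: "typing G (RBag ms) A"

lemma typing_env_size: "typing G m A \<Longrightarrow> size (G i) = occ i m"
proof (induction arbitrary: i rule: typing.induct)
  case (t_lam M G m B)
  then show ?case using t_lam.IH[of "Suc i"] by simp
next
  case (t_es M G m B D n)
  then show ?case using t_es.IH(1)[of "Suc i"] t_es.IH(2)[of i] by simp
qed (auto simp: env_single_def)

lemma typing_bag_size: "typing G (RBag ms) T \<Longrightarrow> \<exists>M. T = TBag M \<and> size M = size ms"
  by (induction G "RBag ms" T arbitrary: ms rule: typing.induct) auto

lemma typing_bag_singleton: "typing D n A \<Longrightarrow> typing D (RBag {#n#}) (TBag {#A#})"
  using t_cons[OF _ t_nil] by (metis add_0_right)

lemma typing_bag_union:
  "typing G1 (RBag a) (TBag M1) \<Longrightarrow> typing G2 (RBag b) (TBag M2) \<Longrightarrow>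
   typing (G1 + G2) (RBag (a + b)) (TBag (M1 + M2))"
proof (induction G1 "RBag a" "TBag M1" arbitrary: a M1 rule: typing.induct)
  case (t_cons G m A D ms M)
  then show ?case using typing.t_cons[of G m A "D + G2" "ms + b" "M + M2"] by (simp add: add_ac)
qed simp

lemma typing_bag_add_mset_inv:
  assumes "typing G (RBag (add_mset m ms)) T"
  shows "\<exists>A M G1 G2. T = TBag (add_mset A M) \<and> G = G1 + G2 \<and> typing G1 m A \<and> typing G2 (RBag ms) (TBag M)"
  using assms
proof (induction G "RBag (add_mset m ms)" T arbitrary: ms rule: typing.induct)
  case (t_cons G0 m1 A1 D ms1 M1)
  show ?case
  proof (cases "m1 = m")
    case False
    then obtain ms2 where ms1: "ms1 = add_mset m ms2" and ms: "ms = add_mset m1 ms2"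
      using t_cons.hyps(5) by (metis add_eq_conv_ex)
    from t_cons.hyps(4)[OF ms1] obtain A M G1 G2 where
      "M1 = add_mset A M" "D = G1 + G2" "typing G1 m A" and ms2: "typing G2 (RBag ms2) (TBag M)"
      by blast
    moreover have "typing (G0 + G2) (RBag ms) (TBag (add_mset A1 M))"
      using typing.t_cons[OF t_cons.hyps(1) ms2] ms by simp
    ultimately show ?thesis
      by (intro exI[of _ A] exI[of _ "add_mset A1 M"] exI[of _ G1] exI[of _ "G0 + G2"])
        (simp add: add_ac add_mset_commute)
  qed (use t_cons in auto)
qed simp

lemma typing_bag_type_add_mset_inv:
  "typing G (RBag ns) (TBag (add_mset A M)) \<Longrightarrow>
   \<exists>n ns' G1 G2. ns = add_mset n ns' \<and> G = G1 + G2 \<and> typing G1 n A \<and> typing G2 (RBag ns') (TBag M)"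
proof (induction G "RBag ns" "TBag (add_mset A M)" arbitrary: ns M rule: typing.induct)
  case (t_cons G0 m1 A1 D ms1 M1)
  show ?case
  proof (cases "A1 = A")
    case False
    then obtain M2 where M1: "M1 = add_mset A M2" and M: "M = add_mset A1 M2"
      using t_cons.hyps(5) by (metis add_eq_conv_ex)
    from t_cons.hyps(4)[OF M1] obtain n ns' G1 G2 where
      "ms1 = add_mset n ns'" "D = G1 + G2" "typing G1 n A" and ns': "typing G2 (RBag ns') (TBag M2)"
      by blast
    moreover have "typing (G0 + G2) (RBag (add_mset m1 ns')) (TBag M)"
      using typing.t_cons[OF t_cons.hyps(1) ns'] M by simp
    ultimately show ?thesis using t_cons.hyps(3)
      by (intro exI[of _ n] exI[of _ "add_mset m1 ns'"] exI[of _ G1] exI[of _ "G0 + G2"])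
        (simp add: add_ac add_mset_commute)
  qed (use t_cons in auto)
qed simp

lemma typing_bag_type_empty_inv: "typing G (RBag ns) (TBag {#}) \<Longrightarrow> ns = {#} \<and> G = 0"
  by (erule typing_bagE) simp_all

lemma typing_bag_type_single_inv:
  "typing G (RBag ns) (TBag {#A#}) \<Longrightarrow> \<exists>n. ns = {#n#} \<and> typing G n A"
  by (fastforce dest: typing_bag_type_add_mset_inv typing_bag_type_empty_inv)

lemma typing_bag_type_union_inv:
  "typing G (RBag ns) (TBag (M1 + M2)) \<Longrightarrow> \<exists>ns1 ns2 G1 G2. ns = ns1 + ns2 \<and> G = G1 + G2 \<and>
     typing G1 (RBag ns1) (TBag M1) \<and> typing G2 (RBag ns2) (TBag M2)"
proof (induction M1 arbitrary: G ns)
  case empty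
  have "ns = {#} + ns" "G = 0 + G" by simp_all
  then show ?case using empty t_nil by fastforce
next
  case (add A M1)
  from add.prems obtain n ns' G1 G2 where h: "ns = add_mset n ns'" "G = G1 + G2" "typing G1 n A"
     "typing G2 (RBag ns') (TBag (M1 + M2))" using typing_bag_type_add_mset_inv by fastforce
  from add.IH[OF h(4)] obtain ns1 ns2 H1 H2 where h2: "ns' = ns1 + ns2" "G2 = H1 + H2"
     "typing H1 (RBag ns1) (TBag M1)" "typing H2 (RBag ns2) (TBag M2)" by blast
  have "ns = add_mset n ns1 + ns2" "G = (G1 + H1) + H2" using h h2 by (simp_all add: add_ac)
  then show ?case using typing.t_cons[OF h(3) h2(3)] h2(4) by fastforce
qed

abbreviation ren_bind :: "(nat \<Rightarrow> nat) \<Rightarrow> nat \<Rightarrow> nat" where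
  "ren_bind \<rho> \<equiv> case_nat 0 (\<lambda>i. Suc (\<rho> i))"

primrec rren :: "(nat \<Rightarrow> nat) \<Rightarrow> rterm \<Rightarrow> rterm" where
  "rren \<rho> (RVar i) = RVar (\<rho> i)"
| "rren \<rho> (RLam m) = RLam (rren (ren_bind \<rho>) m)"
| "rren \<rho> (RApp m n) = RApp (rren \<rho> m) (rren \<rho> n)"
| "rren \<rho> (RES m n) = RES (rren (ren_bind \<rho>) m) (rren \<rho> n)"
| "rren \<rho> (RDer m) = RDer (rren \<rho> m)"
| "rren \<rho> (RBag ms) = RBag (image_mset (rren \<rho>) ms)"

definition lift_ren :: "nat \<Rightarrow> nat \<Rightarrow> nat \<Rightarrow> nat" where
  "lift_ren k c i = (if c \<le> i then i + k else i)"

lemma ren_bind_lift_ren: "ren_bind (lift_ren k c) = lift_ren k (Suc c)"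
  by (rule ext) (simp add: lift_ren_def split: nat.split)

lemma inj_lift_ren: "inj (lift_ren k c)"
  by (rule injI) (simp add: lift_ren_def split: if_splits)

lemma inj_ren_bind: "inj \<rho> \<Longrightarrow> inj (ren_bind \<rho>)"
  by (auto simp: inj_def split: nat.splits)

lemma rlift_eq_rren: "rlift k c m = rren (lift_ren k c) m"
proof (induction m arbitrary: c)
  case (RVar i)
  then show ?case by (simp add: lift_ren_def)
next
  case (RBag ms)
  then show ?case by (simp cong: image_mset_cong)
qed (simp_all add: ren_bind_lift_ren)

lemma dlift_eq_dren: "dlift k c M = dren (lift_ren k c) M"
proof (induction M arbitrary: c)
  case (Var i)
  then show ?case by (simp add: lift_ren_def)
qed (simp_all add: ren_bind_lift_ren)

lemma env_comp_single: "inj \<rho> \<Longrightarrow> env_single (\<rho> i) A \<circ> \<rho> = env_single i A"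
  by (rule ext) (auto simp: env_single_def inj_eq)

lemma env_comp_cons: "env_cons M G \<circ> ren_bind \<rho> = env_cons M (G \<circ> \<rho>)"
  by (rule ext) (simp add: env_cons_def split: nat.split)

lemma env_comp_add: "(G + D) \<circ> \<rho> = (G \<circ> \<rho>) + (D \<circ> \<rho> :: env)"
  by (rule ext) simp

lemma env_comp_zero [simp]: "(0 :: env) \<circ> \<rho> = 0"
  by (rule ext) simp

lemma typing_rren_inv: "typing G (rren \<rho> m) A \<Longrightarrow> inj \<rho> \<Longrightarrow> typing (G \<circ> \<rho>) m A"
proof (induction m arbitrary: \<rho> G A)
  case (RVar i)
  then have "G = env_single (\<rho> i) A" by (auto elim: typing_varE)
  with RVar.prems(2) show ?case by (metis env_comp_single t_var)
next
  case (RLam m)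
  from RLam.prems(1) obtain M B where
    "A = TArr M B" "typing (env_cons M G) (rren (ren_bind \<rho>) m) B"
    by (auto elim: typing_lamE)
  with RLam.IH[OF _ inj_ren_bind[OF RLam.prems(2)]] show ?case by (metis env_comp_cons t_lam)
next
  case (RApp m n)
  from RApp.prems(1) obtain M G1 G2 where "G = G1 + G2"
    "typing G1 (rren \<rho> m) (TArr M A)" "typing G2 (rren \<rho> n) (TBag M)"
    by (auto elim: typing_appE)
  with RApp.IH(1)[OF _ RApp.prems(2)] RApp.IH(2)[OF _ RApp.prems(2)] show ?case
    by (metis env_comp_add t_app)
next
  case (RES m n)
  from RES.prems(1) obtain M G1 G2 where "G = G1 + G2"
    "typing (env_cons M G1) (rren (ren_bind \<rho>) m) A" "typing G2 (rren \<rho> n) (TBag M)"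
    by (auto elim: typing_esE)
  with RES.IH(1)[OF _ inj_ren_bind[OF RES.prems(2)]] RES.IH(2)[OF _ RES.prems(2)] show ?case
    by (metis env_comp_cons env_comp_add t_es)
next
  case (RDer m)
  then show ?case by (auto elim!: typing_derE intro!: t_der)
next
  case (RBag ms)
  then show ?case
  proof (induction ms arbitrary: G A)
    case empty
    then have "G = 0" "A = TBag {#}" by (auto elim: typing_bagE)
    then show ?case by (metis env_comp_zero t_nil)
  next
    case (add x ms)
    have "typing G (RBag (add_mset (rren \<rho> x) (image_mset (rren \<rho>) ms))) A"
      using add.prems(2) by simp
    from typing_bag_add_mset_inv[OF this] obtain A1 M G1 G2 where
      "A = TBag (add_mset A1 M)" "G = G1 + G2" and x: "typing G1 (rren \<rho> x) A1"
      and ms: "typing G2 (RBag (image_mset (rren \<rho>) ms)) (TBag M)" by auto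
    moreover have "typing (G1 \<circ> \<rho>) x A1" using add.prems(1)[OF _ x add.prems(3)] by (simp add: comp_def)
    moreover have "typing (G2 \<circ> \<rho>) (RBag ms) (TBag M)" using add.IH[of G2 "TBag M"] ms add.prems(1,3) by (simp add: comp_def)
    ultimately show ?case by (metis env_comp_add t_cons)
  qed
qed

lemma occ_rlift_gap: "c \<le> i \<Longrightarrow> i < c + k \<Longrightarrow> occ i (rlift k c m) = 0"
proof (induction m arbitrary: i c)
  case (RBag ms)
  then show ?case by (induction ms) auto
qed auto

lemma occ_rlift_below: "d < c \<Longrightarrow> occ d (rlift k c m) = occ d m"
proof (induction m arbitrary: d c)
  case (RBag ms)
  then show ?case by (induction ms) auto
qed auto

lemma typing_rlift: "typing G m A \<Longrightarrow> typing (env_lift k c G) (rlift k c m) A"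
proof (induction arbitrary: c rule: typing.induct)
  case (t_lam M G m B)
  then show ?case using t_lam.IH[of "Suc c"] by (auto simp: env_lift_cons intro!: typing.t_lam)
next
  case (t_es M G m B D n)
  have "typing (env_cons M (env_lift k c G)) (rlift k (Suc c) m) B"
    using t_es.IH(1)[of "Suc c"] by (simp only: env_lift_cons)
  from typing.t_es[OF this t_es.IH(2)] show ?case by (simp only: env_lift_add rlift.simps)
qed (auto simp: env_lift_single env_lift_add intro!: typing.intros)

text \<open>The environment is recovered by precomposing with the lifting; it is empty on the
  \<open>k\<close> indices skipped by the lifting because no variable of \<open>rlift k c m\<close> lives there.\<close>
lemma typing_rlift_inv: "typing G (rlift k c m) A \<Longrightarrow> \<exists>G0. typing G0 m A \<and> G = env_lift k c G0"
proof (intro exI conjI)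
  assume typed: "typing G (rlift k c m) A"
  then show "typing (G \<circ> lift_ren k c) m A"
    by (simp add: rlift_eq_rren typing_rren_inv inj_lift_ren)
  have "G i = {#}" if "c \<le> i" "i < c + k" for i
    using typing_env_size[OF typed, of i] occ_rlift_gap[OF that] by simp
  then show "G = env_lift k c (G \<circ> lift_ren k c)"
    by (auto simp: env_lift_def lift_ren_def)
qed

section \<open>Linear substitution\<close>

lemma lsub_RBag: "lsub d (RBag ms) ns q \<Longrightarrow> \<exists>ms'. q = RBag ms'"
  by (erule lsub.cases) auto

lemma typing_lsub:
  "typing Ga a B \<Longrightarrow> typing D (RBag ns) (TBag (Ga d)) \<Longrightarrow>
   \<exists>q. lsub d a ns q \<and> typing (subst_env d Ga D) q B"
proof (induction arbitrary: d ns D rule: typing.induct)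
  case (t_var i A)
  show ?case
  proof (cases "i = d")
    case True
    with t_var obtain n where "ns = {#n#}" "typing D n A"
      by (auto simp: env_single_def dest: typing_bag_type_single_inv)
    with True show ?thesis
      by (metis typing_rlift subst_env_single_same lsub.ls_hit)
  next
    case False
    with t_var have "ns = {#}" "D = 0"
      by (auto simp: env_single_def dest: typing_bag_type_empty_inv)
    moreover have "typing (subst_env d (env_single i A) 0) (if d < i then RVar (i - 1) else RVar i) A"
      using False by (simp add: subst_env_single_other typing.t_var)
    ultimately show ?thesis using lsub.ls_var[OF False] by blast
  qed
next
  case (t_lam M G m B)
  from t_lam.IH[where d = "Suc d"] t_lam.prems obtain q where
    q: "lsub (Suc d) m ns q" "typing (subst_env (Suc d) (env_cons M G) D) q B"
    by auto
  then have "typing (env_cons M (subst_env d G D)) q B" by (simp only: subst_env_cons)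
  with q(1) show ?case using typing.t_lam lsub.ls_lam by blast
next
  case (t_app G m M B D' n)
  from t_app.prems obtain ns1 ns2 D1 D2 where s: "ns = ns1 + ns2" "D = D1 + D2"
    "typing D1 (RBag ns1) (TBag (G d))" "typing D2 (RBag ns2) (TBag (D' d))"
    using typing_bag_type_union_inv by (metis plus_fun_apply)
  from t_app.IH(1)[OF s(3)] t_app.IH(2)[OF s(4)] obtain q1 q2 where
    q: "lsub d m ns1 q1" "typing (subst_env d G D1) q1 (TArr M B)"
       "lsub d n ns2 q2" "typing (subst_env d D' D2) q2 (TBag M)" by blast
  have "typing (subst_env d (G + D') D) (RApp q1 q2) B"
    using typing.t_app[OF q(2,4)] s(2) by (simp only: subst_env_add)
  with lsub.ls_app[OF q(1,3)] s(1) show ?case by blast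
next
  case (t_es M G m B D' n)
  from t_es.prems obtain ns1 ns2 D1 D2 where s: "ns = ns1 + ns2" "D = D1 + D2"
    "typing D1 (RBag ns1) (TBag (env_cons M G (Suc d)))" "typing D2 (RBag ns2) (TBag (D' d))"
    using typing_bag_type_union_inv by (metis env_cons_simps(2) plus_fun_apply)
  from t_es.IH(1)[OF s(3)] t_es.IH(2)[OF s(4)] obtain q1 q2 where
    q: "lsub (Suc d) m ns1 q1" "typing (env_cons M (subst_env d G D1)) q1 B"
       "lsub d n ns2 q2" "typing (subst_env d D' D2) q2 (TBag M)"
    by (auto simp only: subst_env_cons)
  have "typing (subst_env d (G + D') D) (RES q1 q2) B"
    using typing.t_es[OF q(2,4)] s(2) by (simp only: subst_env_add)
  with lsub.ls_es[OF q(1,3)] s(1) show ?case by blast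
next
  case (t_der G m A)
  then show ?case by (blast intro: typing.t_der lsub.ls_der)
next
  case t_nil
  then have "ns = {#}" "D = 0" using typing_bag_type_empty_inv by auto
  then show ?case using lsub.ls_nil typing.t_nil by (metis subst_env_zero)
next
  case (t_cons G m A D' ms M)
  from t_cons.prems obtain ns1 ns2 D1 D2 where s: "ns = ns1 + ns2" "D = D1 + D2"
    "typing D1 (RBag ns1) (TBag (G d))" "typing D2 (RBag ns2) (TBag (D' d))"
    using typing_bag_type_union_inv by (metis plus_fun_apply)
  from t_cons.IH(1)[OF s(3)] t_cons.IH(2)[OF s(4)] obtain q1 ms' where
    q: "lsub d m ns1 q1" "typing (subst_env d G D1) q1 A"
       "lsub d (RBag ms) ns2 (RBag ms')" "typing (subst_env d D' D2) (RBag ms') (TBag M)"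
    by (metis lsub_RBag)
  have "typing (subst_env d (G + D') D) (RBag (add_mset q1 ms')) (TBag (add_mset A M))"
    using typing.t_cons[OF q(2,4)] s(2) by (simp only: subst_env_add)
  with lsub.ls_cons[OF q(1,3)] s(1) show ?case by blast
qed

lemma typing_lsub_inv:
  "lsub d a ns q \<Longrightarrow> typing G q B \<Longrightarrow>
   \<exists>Ga D. typing Ga a B \<and> typing D (RBag ns) (TBag (Ga d)) \<and> G = subst_env d Ga D"
proof (induction arbitrary: G B rule: lsub.induct)
  case (ls_hit d n)
  from typing_rlift_inv[OF ls_hit] obtain D where D: "typing D n B" "G = env_lift d 0 D" by blast
  have "typing D (RBag {#n#}) (TBag (env_single d B d))"
    using typing_bag_singleton[OF D(1)] by (simp add: env_single_def)
  moreover have "G = subst_env d (env_single d B) D" using D(2) by (simp only: subst_env_single_same)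
  ultimately show ?case using typing.t_var[of d B] by blast
next
  case (ls_var i d)
  then have "G = env_single (if d < i then i - 1 else i) B"
    by (auto elim: typing_varE split: if_splits)
  moreover have "typing 0 (RBag {#}) (TBag (env_single i B d))"
    using ls_var(1) typing.t_nil by (simp add: env_single_def)
  ultimately show ?case using typing.t_var[of i B] subst_env_single_other[OF ls_var(1)] by metis
next
  case (ls_lam d m A m')
  from ls_lam.prems obtain M B' where B: "B = TArr M B'" and m': "typing (env_cons M G) m' B'"
    by (auto elim: typing_lamE)
  from ls_lam.IH[OF m'] obtain Ga D where ih: "typing Ga m B'"
    "typing D (RBag A) (TBag (Ga (Suc d)))" "env_cons M G = subst_env (Suc d) Ga D" by blast
  note Ga = env_cons_eq_subst_env_Suc[OF ih(3)]
  have "typing (env_cons M (\<lambda>i. Ga (Suc i))) m B'" using ih(1) by (subst (asm) Ga(1))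
  with ih(2) Ga(2) B show ?case using typing.t_lam by blast
next
  case (ls_app d m A m' n B0 n')
  from ls_app.prems obtain G1 G2 M where G: "G = G1 + G2" and
    "typing G1 m' (TArr M B)" "typing G2 n' (TBag M)" by (auto elim: typing_appE)
  with ls_app.IH obtain Ga1 D1 Ga2 D2 where
    i1: "typing Ga1 m (TArr M B)" "typing D1 (RBag A) (TBag (Ga1 d))" "G1 = subst_env d Ga1 D1"
    and i2: "typing Ga2 n (TBag M)" "typing D2 (RBag B0) (TBag (Ga2 d))" "G2 = subst_env d Ga2 D2"
    by meson
  have "typing (D1 + D2) (RBag (A + B0)) (TBag ((Ga1 + Ga2) d))"
    using typing_bag_union[OF i1(2) i2(2)] by simp
  moreover have "G = subst_env d (Ga1 + Ga2) (D1 + D2)" using G i1(3) i2(3) by (simp only: subst_env_add)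
  ultimately show ?case using typing.t_app[OF i1(1) i2(1)] by blast
next
  case (ls_es d m A m' n B0 n')
  from ls_es.prems obtain G1 G2 M where G: "G = G1 + G2" and
    "typing (env_cons M G1) m' B" "typing G2 n' (TBag M)" by (auto elim: typing_esE)
  with ls_es.IH obtain Ga D1 Ga2 D2 where
    i1: "typing Ga m B" "typing D1 (RBag A) (TBag (Ga (Suc d)))"
      "env_cons M G1 = subst_env (Suc d) Ga D1"
    and i2: "typing Ga2 n (TBag M)" "typing D2 (RBag B0) (TBag (Ga2 d))" "G2 = subst_env d Ga2 D2"
    by meson
  define Gt where "Gt = (\<lambda>i. Ga (Suc i))"
  note Ga = env_cons_eq_subst_env_Suc[OF i1(3), folded Gt_def]
  have "typing (env_cons M Gt) m B" using i1(1) by (subst (asm) Ga(1))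
  from typing.t_es[OF this i2(1)] have "typing (Gt + Ga2) (RES m n) B" .
  moreover have "typing (D1 + D2) (RBag (A + B0)) (TBag ((Gt + Ga2) d))"
    using typing_bag_union[OF i1(2) i2(2)] by (simp add: Gt_def)
  moreover have "G = subst_env d (Gt + Ga2) (D1 + D2)"
    using G Ga(2) i2(3) by (simp only: subst_env_add)
  ultimately show ?case by blast
next
  case (ls_der d m A m')
  then show ?case by (blast elim: typing_derE intro: typing.t_der)
next
  case (ls_nil d)
  then have "G = 0" "B = TBag {#}" by (auto elim: typing_bagE)
  moreover have "typing 0 (RBag {#}) (TBag ((0 :: env) d))" using typing.t_nil by simp
  ultimately show ?case using typing.t_nil subst_env_zero by metis
next
  case (ls_cons d m A m' ms B0 ms')
  from typing_bag_add_mset_inv[OF ls_cons.prems] obtain A1 M G1 G2 where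
    h: "B = TBag (add_mset A1 M)" "G = G1 + G2" "typing G1 m' A1" "typing G2 (RBag ms') (TBag M)"
    by blast
  with ls_cons.IH obtain Ga1 D1 Ga2 D2 where
    i1: "typing Ga1 m A1" "typing D1 (RBag A) (TBag (Ga1 d))" "G1 = subst_env d Ga1 D1"
    and i2: "typing Ga2 (RBag ms) (TBag M)" "typing D2 (RBag B0) (TBag (Ga2 d))"
      "G2 = subst_env d Ga2 D2"
    by meson
  have "typing (D1 + D2) (RBag (A + B0)) (TBag ((Ga1 + Ga2) d))"
    using typing_bag_union[OF i1(2) i2(2)] by simp
  moreover have "G = subst_env d (Ga1 + Ga2) (D1 + D2)"
    using h(2) i1(3) i2(3) by (simp only: subst_env_add)
  ultimately show ?case using typing.t_cons[OF i1(1) i2(1)] h(1) by blast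
qed

lemma rlplug_Nil [simp]: "rlplug m [] = m"
  by (simp add: rlplug_def)

lemma rlplug_snoc [simp]: "rlplug m (ls @ [l]) = RES (rlplug m ls) l"
  by (simp add: rlplug_def)

text \<open>Inversion for a term in a list context \<open>ls\<close> of length \<open>k\<close>: the plugged term has some
  type in an environment \<open>H\<close> whose first \<open>k\<close> entries are bound by \<open>ls\<close>, and it may be
  replaced by any term typed in an environment agreeing with \<open>H\<close> on these entries.\<close>
lemma typing_rlplug_inv:
  "typing G (rlplug m ls) A \<Longrightarrow> \<exists>H C. typing H m A \<and> G = (\<lambda>j. H (j + length ls)) + C \<and>
     (\<forall>H' m' A'. typing H' m' A' \<longrightarrow> (\<forall>i<length ls. H' i = H i) \<longrightarrow>
        typing ((\<lambda>j. H' (j + length ls)) + C) (rlplug m' ls) A')"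
proof (induction ls arbitrary: G A rule: rev_induct)
  case Nil
  then show ?case by (intro exI[of _ G] exI[of _ 0]) simp
next
  case (snoc l ls)
  define k where "k = length ls"
  from snoc.prems obtain G1 G2 M where h: "G = G1 + G2" "typing (env_cons M G1) (rlplug m ls) A"
    "typing G2 l (TBag M)" by (auto elim: typing_esE)
  from snoc.IH[OF h(2)] obtain H C where ih: "typing H m A" "env_cons M G1 = (\<lambda>j. H (j + k)) + C"
    "\<And>H' m' A'. typing H' m' A' \<Longrightarrow> (\<forall>i<k. H' i = H i) \<Longrightarrow>
        typing ((\<lambda>j. H' (j + k)) + C) (rlplug m' ls) A'" unfolding k_def by blast
  have M: "M = H k + C 0" using fun_cong[OF ih(2), of 0] by simp
  have G1: "G1 j = H (j + Suc k) + C (Suc j)" for j using fun_cong[OF ih(2), of "Suc j"] by simp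
  define C' where "C' = (\<lambda>j. C (Suc j)) + G2"
  have "G = (\<lambda>j. H (j + Suc k)) + C'"
    by (rule ext) (simp add: h(1) G1 C'_def add.assoc)
  moreover have "typing ((\<lambda>j. H' (j + Suc k)) + C') (rlplug m' (ls @ [l])) A'"
    if a: "typing H' m' A'" "\<forall>i<Suc k. H' i = H i" for H' m' A'
  proof -
    have "(\<lambda>j. H' (j + k)) + C = env_cons M ((\<lambda>j. H' (j + Suc k)) + (\<lambda>j. C (Suc j)))"
      using a(2) M by (auto simp: env_cons_def split: nat.split)
    with ih(3)[OF a(1)] a(2) have "typing (env_cons M ((\<lambda>j. H' (j + Suc k)) + (\<lambda>j. C (Suc j))))
        (rlplug m' ls) A'" by simp
    from typing.t_es[OF this h(3)] show ?thesis by (simp add: C'_def add.assoc)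
  qed
  ultimately show ?case using ih(1) unfolding k_def length_append_singleton by blast
qed

lemma typing_der_redex_inv:
  assumes "typing G (RDer (rlplug (RBag ms) ls)) A"
  shows "\<exists>m. ms = {#m#} \<and> typing G (rlplug m ls) A"
proof -
  from assms have "typing G (rlplug (RBag ms) ls) (TBag {#A#})" by (auto elim: typing_derE)
  from typing_rlplug_inv[OF this] obtain H C where p: "typing H (RBag ms) (TBag {#A#})"
    "G = (\<lambda>j. H (j + length ls)) + C"
    "\<And>H' m' A'. typing H' m' A' \<Longrightarrow> (\<forall>i<length ls. H' i = H i) \<Longrightarrow>
       typing ((\<lambda>j. H' (j + length ls)) + C) (rlplug m' ls) A'"
    by blast
  from typing_bag_type_single_inv[OF p(1)] obtain m where "ms = {#m#}" "typing H m A" by blast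
  with p(2,3) show ?thesis by auto
qed

lemma typing_der_redex_expand:
  assumes "typing G (rlplug m ls) A"
  shows "typing G (RDer (rlplug (RBag {#m#}) ls)) A"
proof -
  from typing_rlplug_inv[OF assms] obtain H C where p: "typing H m A"
    "G = (\<lambda>j. H (j + length ls)) + C"
    "\<And>H' m' A'. typing H' m' A' \<Longrightarrow> (\<forall>i<length ls. H' i = H i) \<Longrightarrow>
       typing ((\<lambda>j. H' (j + length ls)) + C) (rlplug m' ls) A'"
    by blast
  from p(3)[OF typing_bag_singleton[OF p(1)]] p(2) show ?thesis by (simp add: typing.t_der)
qed

lemma typing_beta_redex_iff:
  "typing G (RApp (rlplug (RLam m) ls) n) A \<longleftrightarrow>
   typing G (rlplug (RES m (rlift (length ls) 0 n)) ls) A"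
  (is "?redex \<longleftrightarrow> ?reduct")
proof
  define k where "k = length ls"
  assume ?redex
  then obtain G1 G2 M where h: "G = G1 + G2" "typing G1 (rlplug (RLam m) ls) (TArr M A)"
    "typing G2 n (TBag M)" by (auto elim: typing_appE)
  from typing_rlplug_inv[OF h(2)] obtain H C where p: "typing H (RLam m) (TArr M A)"
    "G1 = (\<lambda>j. H (j + k)) + C"
    "\<And>H' m' A'. typing H' m' A' \<Longrightarrow> (\<forall>i<k. H' i = H i) \<Longrightarrow>
       typing ((\<lambda>j. H' (j + k)) + C) (rlplug m' ls) A'"
    unfolding k_def by blast
  from p(1) have "typing (env_cons M H) m A" by (auto elim: typing_lamE)
  from typing.t_es[OF this typing_rlift[OF h(3), of k 0]]
  have "typing (H + env_lift k 0 G2) (RES m (rlift k 0 n)) A" .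
  from p(3)[OF this] have "typing ((\<lambda>j. (H + env_lift k 0 G2) (j + k)) + C)
      (rlplug (RES m (rlift k 0 n)) ls) A"
    by (simp add: env_lift_0_below)
  moreover have "(\<lambda>j. (H + env_lift k 0 G2) (j + k)) + C = G"
    by (rule ext) (simp add: h(1) p(2) add_ac)
  ultimately show ?reduct unfolding k_def by simp
next
  define k where "k = length ls"
  assume ?reduct
  from typing_rlplug_inv[OF this[folded k_def]] obtain H C where p: "typing H (RES m (rlift k 0 n)) A"
    "G = (\<lambda>j. H (j + k)) + C"
    "\<And>H' m' A'. typing H' m' A' \<Longrightarrow> (\<forall>i<k. H' i = H i) \<Longrightarrow>
       typing ((\<lambda>j. H' (j + k)) + C) (rlplug m' ls) A'"
    unfolding k_def by blast
  from p(1) obtain H1 H2 M where h: "H = H1 + H2" "typing (env_cons M H1) m A"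
    "typing H2 (rlift k 0 n) (TBag M)" by (auto elim: typing_esE)
  from typing_rlift_inv[OF h(3)] obtain D where D: "typing D n (TBag M)" "H2 = env_lift k 0 D"
    by blast
  from p(3)[OF typing.t_lam[OF h(2)]]
  have "typing ((\<lambda>j. H1 (j + k)) + C) (rlplug (RLam m) ls) (TArr M A)"
    using h(1) D(2) by (simp add: env_lift_0_below)
  from typing.t_app[OF this D(1)]
  have "typing ((\<lambda>j. H1 (j + k)) + C + D) (RApp (rlplug (RLam m) ls) n) A" .
  moreover have "(\<lambda>j. H1 (j + k)) + C + D = G"
    by (rule ext) (simp add: p(2) h(1) D(2) add_ac)
  ultimately show ?redex by simp
qed

lemma typing_sub_redex_inv:
  assumes "typing G (RES m (rlplug (RBag ns) ls)) A"
  shows "size ns = occ 0 m \<and> (\<exists>p. lsub 0 (rlift (length ls) 1 m) ns p \<and> typing G (rlplug p ls) A)"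
proof -
  define k where "k = length ls"
  from assms obtain G1 G2 M where h: "G = G1 + G2" "typing (env_cons M G1) m A"
    "typing G2 (rlplug (RBag ns) ls) (TBag M)" by (auto elim: typing_esE)
  from typing_rlplug_inv[OF h(3)] obtain H C where pl: "typing H (RBag ns) (TBag M)"
    "G2 = (\<lambda>j. H (j + k)) + C"
    "\<And>H' m' A'. typing H' m' A' \<Longrightarrow> (\<forall>i<k. H' i = H i) \<Longrightarrow>
       typing ((\<lambda>j. H' (j + k)) + C) (rlplug m' ls) A'"
    unfolding k_def by blast
  have "size ns = occ 0 m"
    using typing_bag_size[OF pl(1)] typing_env_size[OF h(2), of 0] by auto
  have "typing (env_cons M (env_lift k 0 G1)) (rlift k 1 m) A"
    using typing_rlift[OF h(2), of k 1] by (simp add: env_lift_cons)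
  from typing_lsub[OF this, where d = 0] pl(1) obtain q where
    q: "lsub 0 (rlift k 1 m) ns q" "typing (env_lift k 0 G1 + H) q A"
    by auto
  from pl(3)[OF q(2)] have "typing ((\<lambda>j. (env_lift k 0 G1 + H) (j + k)) + C) (rlplug q ls) A"
    by (simp add: env_lift_0_below)
  moreover have "(\<lambda>j. (env_lift k 0 G1 + H) (j + k)) + C = G"
    by (rule ext) (simp add: h(1) pl(2) add_ac)
  ultimately show ?thesis using \<open>size ns = occ 0 m\<close> q(1) unfolding k_def by auto
qed

lemma typing_sub_redex_expand:
  assumes "lsub 0 (rlift (length ls) 1 m) ns p" and "typing G (rlplug p ls) A"
  shows "typing G (RES m (rlplug (RBag ns) ls)) A"
proof -
  define k where "k = length ls"
  from typing_rlplug_inv[OF assms(2)] obtain H C where pl: "typing H p A"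
    "G = (\<lambda>j. H (j + k)) + C"
    "\<And>H' m' A'. typing H' m' A' \<Longrightarrow> (\<forall>i<k. H' i = H i) \<Longrightarrow>
       typing ((\<lambda>j. H' (j + k)) + C) (rlplug m' ls) A'"
    unfolding k_def by blast
  from typing_lsub_inv[OF assms(1) pl(1)] obtain Ga D where u: "typing Ga (rlift k 1 m) A"
    "typing D (RBag ns) (TBag (Ga 0))" "H = subst_env 0 Ga D" unfolding k_def by blast
  from typing_rlift_inv[OF u(1)] obtain G0 where g: "typing G0 m A" "Ga = env_lift k 1 G0" by blast
  define G0t where "G0t = (\<lambda>i. G0 (Suc i))"
  have G0: "G0 = env_cons (G0 0) G0t" unfolding G0t_def by (rule env_cons_eta)
  have Ga: "Ga = env_cons (G0 0) (env_lift k 0 G0t)"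
    using g(2) G0 env_lift_cons[of k 0] by (metis One_nat_def)
  have H: "H = env_lift k 0 G0t + D" using u(3) Ga by simp
  have "typing D (RBag ns) (TBag (G0 0))" using u(2) Ga by simp
  from pl(3)[OF this] have "typing ((\<lambda>j. D (j + k)) + C) (rlplug (RBag ns) ls) (TBag (G0 0))"
    using H by (simp add: env_lift_0_below)
  moreover from g(1) have "typing (env_cons (G0 0) G0t) m A" by (subst (asm) G0)
  ultimately have "typing (G0t + ((\<lambda>j. D (j + k)) + C)) (RES m (rlplug (RBag ns) ls)) A"
    using typing.t_es by blast
  moreover have "G0t + ((\<lambda>j. D (j + k)) + C) = G"
    by (rule ext) (simp add: pl(2) H add_ac)
  ultimately show ?thesis by simp
qed

section \<open>Progress, subject expansion and normalisation\<close>

lemma rstep_Some_congs: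
  assumes "rstep m (Some m')"
  shows "rstep (RLam m) (Some (RLam m'))"
    and "rstep (RApp m n) (Some (RApp m' n))" and "rstep (RApp n m) (Some (RApp n m'))"
    and "rstep (RES m n) (Some (RES m' n))" and "rstep (RES n m) (Some (RES n m'))"
    and "rstep (RDer m) (Some (RDer m'))"
    and "rstep (RBag (add_mset m ms)) (Some (RBag (add_mset m' ms)))"
  using rstep.c_lam[OF assms] rstep.c_appl[OF assms] rstep.c_appr[OF assms]
    rstep.c_esl[OF assms] rstep.c_esr[OF assms] rstep.c_der[OF assms] rstep.c_bag[OF assms]
  by simp_all

text \<open>The step is not necessarily the given one: a substitution redex has one reduct per
  bijection between occurrences and bag elements, and only some of them need be typed.\<close>
lemma typing_progress:
  "rstep m r \<Longrightarrow> typing G m A \<Longrightarrow> \<exists>m'. rstep m (Some m') \<and> typing G m' A"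
proof (induction arbitrary: G A rule: rstep.induct)
  case (r_der1 m ls)
  then show ?case using typing_der_redex_inv rstep.r_der1 by fastforce
next
  case (r_der0 ms ls)
  then show ?case using typing_der_redex_inv by fastforce
next
  case (r_beta m ls n)
  then show ?case using typing_beta_redex_iff rstep.r_beta by blast
next
  case (r_sub ns m ls p)
  then show ?case using typing_sub_redex_inv rstep.r_sub by blast
next
  case (r_sub0 ns m ls)
  then show ?case using typing_sub_redex_inv by blast
next
  case (c_lam m r)
  then show ?case by (fastforce elim!: typing_lamE intro: typing.t_lam rstep_Some_congs)
next
  case (c_appl m r n)
  then show ?case by (fastforce elim!: typing_appE intro: typing.t_app rstep_Some_congs)
next
  case (c_appr n r m)
  then show ?case by (fastforce elim!: typing_appE intro: typing.t_app rstep_Some_congs)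
next
  case (c_esl m r n)
  then show ?case by (fastforce elim!: typing_esE intro: typing.t_es rstep_Some_congs)
next
  case (c_esr n r m)
  then show ?case by (fastforce elim!: typing_esE intro: typing.t_es rstep_Some_congs)
next
  case (c_der m r)
  then show ?case by (fastforce elim!: typing_derE intro: typing.t_der rstep_Some_congs)
next
  case (c_bag m r ms)
  then show ?case
    by (fastforce dest: typing_bag_add_mset_inv intro: typing.t_cons rstep_Some_congs)
qed

lemma typing_expansion: "rstep m (Some m') \<Longrightarrow> typing G m' A \<Longrightarrow> typing G m A"
proof (induction m "Some m'" arbitrary: m' G A rule: rstep.induct)
  case (r_der1 m ls)
  then show ?case by (simp add: typing_der_redex_expand)
next
  case (r_beta m ls n)
  then show ?case by (simp add: typing_beta_redex_iff)
next
  case (r_sub ns m ls p)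
  then show ?case by (simp add: typing_sub_redex_expand)
next
  case (c_lam m r)
  then show ?case by (fastforce elim!: typing_lamE intro: typing.t_lam)
next
  case (c_appl m r n)
  then show ?case by (fastforce elim!: typing_appE intro: typing.t_app)
next
  case (c_appr n r m)
  then show ?case by (fastforce elim!: typing_appE intro: typing.t_app)
next
  case (c_esl m r n)
  then show ?case by (fastforce elim!: typing_esE intro: typing.t_es)
next
  case (c_esr n r m)
  then show ?case by (fastforce elim!: typing_esE intro: typing.t_es)
next
  case (c_der m r)
  then show ?case by (fastforce elim!: typing_derE intro: typing.t_der)
next
  case (c_bag m r ms)
  then show ?case by (fastforce dest: typing_bag_add_mset_inv intro: typing.t_cons)
qed

primrec rsize :: "rterm \<Rightarrow> nat" where
  "rsize (RVar i) = 1"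
| "rsize (RLam m) = Suc (rsize m)"
| "rsize (RApp m n) = Suc (rsize m + rsize n)"
| "rsize (RES m n) = Suc (rsize m + rsize n)"
| "rsize (RDer m) = Suc (rsize m)"
| "rsize (RBag ms) = Suc (sum_mset (image_mset rsize ms))"

lemma rsize_rlift [simp]: "rsize (rlift k c m) = rsize m"
proof (induction m arbitrary: c)
  case (RBag ms)
  then show ?case by (induction ms) auto
qed auto

lemma rsize_rlplug: "rsize (rlplug m ls) = rsize m + sum_list (map rsize ls) + length ls"
  by (induction ls rule: rev_induct) auto

lemma rsize_lsub: "lsub d a ns q \<Longrightarrow> rsize q + size ns = rsize a + sum_mset (image_mset rsize ns)"
  by (induction rule: lsub.induct) auto

text \<open>Resource reduction is linear: no step duplicates or erases a subterm.\<close>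
lemma rstep_rsize_less: "rstep m (Some m') \<Longrightarrow> rsize m' < rsize m"
proof (induction m "Some m'" arbitrary: m' rule: rstep.induct)
  case (r_sub ns m ls p)
  from rsize_lsub[OF r_sub.hyps(2)] show ?case by (auto simp: rsize_rlplug)
qed (auto simp: rsize_rlplug)

lemma typing_normalizing: "typing G m A \<Longrightarrow> \<exists>p. rnormal p \<and> rsteps m p"
proof (induction "rsize m" arbitrary: m rule: less_induct)
  case less
  show ?case
  proof (cases "rnormal m")
    case True
    then show ?thesis by (auto simp: rsteps_def)
  next
    case False
    then obtain r where "rstep m r" by (auto simp: rnormal_def)
    from typing_progress[OF this less.prems] obtain m' where
      m': "rstep m (Some m')" "typing G m' A" by blast
    from less.hyps[OF rstep_rsize_less[OF m'(1)] m'(2)] obtain p where "rnormal p" "rsteps m' p"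
      by blast
    with m'(1) show ?thesis unfolding rsteps_def by (blast intro: converse_rtranclp_into_rtranclp)
  qed
qed

section \<open>Approximants and anti-simulation\<close>

inductive_cases approx_VarE: "approx m (Var i)"
inductive_cases approx_LamE: "approx m (Lam M)"
inductive_cases approx_AppE: "approx m (App M N)"
inductive_cases approx_ESE: "approx m (ES M N)"
inductive_cases approx_DerE: "approx m (Der M)"
inductive_cases approx_BangE: "approx m (Bang M)"

lemma image_mset_preimage:
  assumes "\<forall>x\<in>#ms. \<exists>y. P y \<and> x = f y"
  shows "\<exists>ys. (\<forall>y\<in>#ys. P y) \<and> ms = image_mset f ys"
proof -
  define g where "g x = (SOME y. P y \<and> x = f y)" for x
  have g: "P (g x) \<and> x = f (g x)" if "x \<in># ms" for x
    using someI_ex[OF assms[rule_format, OF that]] unfolding g_def .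
  then have "ms = image_mset f (image_mset g ms)"
    by (simp add: image_mset.compositionality cong: image_mset_cong)
  with g show ?thesis by (intro exI[of _ "image_mset g ms"]) auto
qed

lemma approx_dren_inv: "approx m (dren \<rho> M) \<Longrightarrow> \<exists>m0. approx m0 M \<and> m = rren \<rho> m0"
proof (induction M arbitrary: \<rho> m)
  case (Var i)
  then show ?case by (auto elim!: approx_VarE intro: approx.a_var)
next
  case (Lam M)
  from Lam.prems obtain a where "m = RLam a" "approx a (dren (ren_bind \<rho>) M)"
    by (auto elim: approx_LamE)
  with Lam.IH show ?case by (fastforce intro: approx.a_lam)
next
  case (App M N)
  from App.prems obtain a b where "m = RApp a b" "approx a (dren \<rho> M)" "approx b (dren \<rho> N)"
    by (auto elim: approx_AppE)
  with App.IH show ?case by (fastforce intro: approx.a_app)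
next
  case (ES M N)
  from ES.prems obtain a b where
    "m = RES a b" "approx a (dren (ren_bind \<rho>) M)" "approx b (dren \<rho> N)"
    by (auto elim: approx_ESE)
  with ES.IH show ?case by (fastforce intro: approx.a_es)
next
  case (Der M)
  then show ?case by (fastforce elim!: approx_DerE intro: approx.a_der)
next
  case (Bang M)
  from Bang.prems obtain ms where "m = RBag ms" "\<forall>x\<in>#ms. approx x (dren \<rho> M)"
    by (auto elim: approx_BangE)
  with Bang.IH image_mset_preimage[of ms "\<lambda>x. approx x M" "rren \<rho>"] show ?case
    by (fastforce intro: approx.a_bag)
qed

lemma approx_dlift_inv: "approx m (dlift k c M) \<Longrightarrow> \<exists>m0. approx m0 M \<and> m = rlift k c m0"
  by (simp add: dlift_eq_dren rlift_eq_rren approx_dren_inv)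

lemma lplug_Nil [simp]: "lplug M [] = M"
  by (simp add: lplug_def)

lemma lplug_snoc [simp]: "lplug M (Ls @ [L]) = ES (lplug M Ls) L"
  by (simp add: lplug_def)

lemma approx_rlplug:
  "approx n N \<Longrightarrow> list_all2 approx ls Ls \<Longrightarrow> approx (rlplug n ls) (lplug N Ls)"
proof (induction ls arbitrary: Ls rule: rev_induct)
  case (snoc l ls)
  then obtain Ls' L where "Ls = Ls' @ [L]" "list_all2 approx ls Ls'" "approx l L"
    by (auto simp: list_all2_append1 list_all2_Cons1)
  with snoc show ?case by (auto intro: approx.a_es)
qed simp

lemma approx_lplug_inv:
  "approx m (lplug N Ls) \<Longrightarrow> \<exists>n ls. m = rlplug n ls \<and> approx n N \<and> list_all2 approx ls Ls"
proof (induction Ls arbitrary: m rule: rev_induct)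
  case Nil
  then show ?case by (intro exI[of _ m] exI[of _ "[]"]) simp
next
  case (snoc L Ls)
  from snoc.prems obtain a b where "m = RES a b" "approx a (lplug N Ls)" "approx b L"
    by (auto elim: approx_ESE)
  with snoc.IH obtain n ls where "a = rlplug n ls" "approx n N" "list_all2 approx ls Ls" by blast
  with \<open>m = RES a b\<close> \<open>approx b L\<close> show ?case
    by (intro exI[of _ n] exI[of _ "ls @ [b]"]) (simp add: list_all2_appendI)
qed

lemma approx_dsubst_inv:
  "approx q (dsubst d N M) \<Longrightarrow> \<exists>a ns. approx a M \<and> (\<forall>n\<in>#ns. approx n N) \<and> lsub d a ns q"
proof (induction M arbitrary: d q)
  case (Var i)
  show ?case
  proof (cases "i = d")
    case True
    with Var obtain n where "approx n N" "q = rlift d 0 n" by (auto dest: approx_dlift_inv)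
    with True show ?thesis
      using approx.a_var[of i] lsub.ls_hit[of d n] by (intro exI[of _ "RVar i"] exI[of _ "{#n#}"]) simp
  next
    case False
    with Var have "q = (if d < i then RVar (i - 1) else RVar i)"
      by (auto elim: approx_VarE split: if_splits)
    with False show ?thesis
      using approx.a_var[of i] lsub.ls_var[OF False] by (intro exI[of _ "RVar i"] exI[of _ "{#}"]) simp
  qed
next
  case (Lam M)
  from Lam.prems obtain q' where "q = RLam q'" "approx q' (dsubst (Suc d) N M)"
    by (auto elim: approx_LamE)
  with Lam.IH show ?case by (blast intro: approx.a_lam lsub.ls_lam)
next
  case (App M1 M2)
  from App.prems obtain q1 q2 where q: "q = RApp q1 q2" and q12:
    "approx q1 (dsubst d N M1)" "approx q2 (dsubst d N M2)"
    by (auto elim: approx_AppE)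
  from App.IH(1)[OF q12(1)] App.IH(2)[OF q12(2)] obtain a1 ns1 a2 ns2 where
    "approx a1 M1" "\<forall>n\<in>#ns1. approx n N" "lsub d a1 ns1 q1"
    "approx a2 M2" "\<forall>n\<in>#ns2. approx n N" "lsub d a2 ns2 q2" by blast
  with q show ?case
    by (intro exI[of _ "RApp a1 a2"] exI[of _ "ns1 + ns2"]) (auto intro: approx.a_app lsub.ls_app)
next
  case (ES M1 M2)
  from ES.prems obtain q1 q2 where q: "q = RES q1 q2" and q12:
    "approx q1 (dsubst (Suc d) N M1)" "approx q2 (dsubst d N M2)"
    by (auto elim: approx_ESE)
  from ES.IH(1)[OF q12(1)] ES.IH(2)[OF q12(2)] obtain a1 ns1 a2 ns2 where
    "approx a1 M1" "\<forall>n\<in>#ns1. approx n N" "lsub (Suc d) a1 ns1 q1"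
    "approx a2 M2" "\<forall>n\<in>#ns2. approx n N" "lsub d a2 ns2 q2" by blast
  with q show ?case
    by (intro exI[of _ "RES a1 a2"] exI[of _ "ns1 + ns2"]) (auto intro: approx.a_es lsub.ls_es)
next
  case (Der M)
  from Der.prems obtain q' where "q = RDer q'" "approx q' (dsubst d N M)"
    by (auto elim: approx_DerE)
  with Der.IH show ?case by (blast intro: approx.a_der lsub.ls_der)
next
  case (Bang M)
  from Bang.prems obtain qs where qs: "q = RBag qs" "\<forall>x\<in>#qs. approx x (dsubst d N M)"
    by (auto elim: approx_BangE)
  from qs(2) have "\<exists>as ns. (\<forall>x\<in>#as. approx x M) \<and> (\<forall>n\<in>#ns. approx n N) \<and>
      lsub d (RBag as) ns (RBag qs)"
  proof (induction qs)
    case empty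
    show ?case using lsub.ls_nil by (intro exI[of _ "{#}"]) simp
  next
    case (add x qs)
    from add.prems Bang.IH[where q = x and d = d] obtain a1 ns1 where
      "approx a1 M" "\<forall>n\<in>#ns1. approx n N" "lsub d a1 ns1 x" by auto
    moreover from add obtain as ns where
      "\<forall>x\<in>#as. approx x M" "\<forall>n\<in>#ns. approx n N" "lsub d (RBag as) ns (RBag qs)" by auto
    ultimately show ?case
      by (intro exI[of _ "add_mset a1 as"] exI[of _ "ns1 + ns"]) (auto intro: lsub.ls_cons)
  qed
  with qs(1) show ?case by (blast intro: approx.a_bag)
qed

lemma lsub_size_occ: "lsub d a ns q \<Longrightarrow> size ns = occ d a"
  by (induction rule: lsub.induct) auto

lemma root_antisimulation: "root N N' \<Longrightarrow> approx m' N' \<Longrightarrow> \<exists>m. approx m N \<and> rstep m (Some m')"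
proof (induction rule: root.induct)
  case (root_dB M Ls N)
  from approx_lplug_inv[OF root_dB] obtain a b ls where m': "m' = rlplug (RES a b) ls"
    "approx a M" "approx b (dlift (length Ls) 0 N)" "list_all2 approx ls Ls"
    by (blast elim: approx_ESE)
  from approx_dlift_inv[OF m'(3)] obtain b0 where "approx b0 N" "b = rlift (length ls) 0 b0"
    using list_all2_lengthD[OF m'(4)] by auto
  with m' show ?case
    by (metis approx.a_app approx.a_lam approx_rlplug rstep.r_beta)
next
  case (root_sb M N Ls)
  from approx_lplug_inv[OF root_sb] obtain x ls where x: "m' = rlplug x ls"
    "approx x (dsubst 0 N (dlift (length Ls) 1 M))" "list_all2 approx ls Ls" by blast
  from approx_dsubst_inv[OF x(2)] obtain a ns where a: "approx a (dlift (length Ls) 1 M)"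
    "\<forall>n\<in>#ns. approx n N" "lsub 0 a ns x" by blast
  from approx_dlift_inv[OF a(1)] obtain a0 where a0: "approx a0 M" "a = rlift (length ls) 1 a0"
    using list_all2_lengthD[OF x(3)] by auto
  have "approx (RES a0 (rlplug (RBag ns) ls)) (ES M (lplug (Bang N) Ls))"
    by (rule approx.a_es[OF a0(1) approx_rlplug[OF approx.a_bag[OF a(2)] x(3)]])
  moreover have "size ns = occ 0 a0" using lsub_size_occ[OF a(3)] a0(2) occ_rlift_below[of 0 1] by simp
  ultimately show ?case using rstep.r_sub a(3) a0(2) x(1) by blast
next
  case (root_d N Ls)
  from approx_lplug_inv[OF root_d] obtain x ls where "m' = rlplug x ls" "approx x N"
    "list_all2 approx ls Ls" by blast
  then show ?case by (metis approx.a_der approx.a_bag approx_rlplug rstep.r_der1 set_mset_single singletonD)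
qed

lemma sstep_antisimulation: "sstep N N' \<Longrightarrow> approx m' N' \<Longrightarrow> \<exists>m. approx m N \<and> rstep m (Some m')"
proof (induction arbitrary: m' rule: sstep.induct)
  case (s_root N N')
  then show ?case by (rule root_antisimulation)
next
  case (s_lam M M')
  then show ?case by (fastforce elim!: approx_LamE intro: approx.a_lam rstep_Some_congs)
next
  case (s_appl M M' N)
  then show ?case by (fastforce elim!: approx_AppE intro: approx.a_app rstep_Some_congs)
next
  case (s_appr N N' M)
  then show ?case by (fastforce elim!: approx_AppE intro: approx.a_app rstep_Some_congs)
next
  case (s_esl M M' N)
  then show ?case by (fastforce elim!: approx_ESE intro: approx.a_es rstep_Some_congs)
next
  case (s_esr N N' M)
  then show ?case by (fastforce elim!: approx_ESE intro: approx.a_es rstep_Some_congs)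
next
  case (s_der M M')
  then show ?case by (fastforce elim!: approx_DerE intro: approx.a_der rstep_Some_congs)
qed

lemma sstep_rtranclp_reflects_typed_approx:
  assumes "sstep\<^sup>*\<^sup>* N N'" and "approx m' N'" and "typing G m' A"
  shows "\<exists>m. approx m N \<and> typing G m A"
  using assms(1)
proof (induction rule: converse_rtranclp_induct)
  case base
  then show ?case using assms(2,3) by blast
next
  case (step N N'')
  then show ?case using sstep_antisimulation typing_expansion by blast
qed

lemma approx_tplug_inv:
  "approx m (tplug T N) \<Longrightarrow> typing G m A \<Longrightarrow> \<exists>m0 G0 A0. approx m0 N \<and> typing G0 m0 A0"
proof (induction T arbitrary: m G A)
  case (TApp T N')
  from TApp.prems obtain a G1 B where "approx a (tplug T N)" "typing G1 a B"
    by (auto elim!: approx_AppE typing_appE)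
  then show ?case by (rule TApp.IH)
next
  case (TLamApp T N')
  from TLamApp.prems obtain a G1 B where "approx a (tplug T N)" "typing G1 a B"
    by (auto elim!: approx_AppE approx_LamE typing_appE typing_lamE)
  then show ?case by (rule TLamApp.IH)
qed auto

theorem mainTheorem5:
  fixes M :: dterm
  assumes "meaningful M"
  shows "nf_taylor M \<noteq> {}"
proof -
  from assms obtain T \<rho> P where \<rho>: "inj \<rho>" and red: "sstep\<^sup>*\<^sup>* (tplug T (dren \<rho> M)) (Bang P)"
    unfolding meaningful_def by blast
  have "approx (RBag {#}) (Bang P)" by (rule approx.a_bag) simp
  from sstep_rtranclp_reflects_typed_approx[OF red this typing.t_nil] obtain m where
    "approx m (tplug T (dren \<rho> M))" "typing 0 m (TBag {#})" by blast
  from approx_tplug_inv[OF this] obtain m1 G A where m1: "approx m1 (dren \<rho> M)" "typing G m1 A"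
    by blast
  from approx_dren_inv[OF m1(1)] obtain m0 where m0: "approx m0 M" "m1 = rren \<rho> m0" by blast
  with m1(2) \<rho> have "typing (G \<circ> \<rho>) m0 A" by (simp add: typing_rren_inv)
  from typing_normalizing[OF this] obtain p where "rnormal p" "rsteps m0 p" by blast
  with m0(1) have "p \<in> nf_taylor M" by (auto simp: nf_taylor_def taylor_def)
  then show ?thesis by blast
qed

end
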